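(* Let $M$ be a finite-horizon reward-free MDP, $\Pi\subseteq\Pi_{\mathrm{RNS}}$ and $h\in[H]$. For all $\varepsilon>0$, $$\mathsf{Cov}^M_{h,\varepsilon}\le 1+2\sqrt{\frac{C^M_{1;h}}{\varepsilon}}.$$
   Context: Episodic reward-free MDP $M$ (countable $\mathcal{X}$, actions $\mathcal{A}$, horizon $H$); $\Pi_{\mathrm{RNS}}$ randomized non-stationary policies; $d^{M,\pi}_h(x,a)$ is the layer-$h$ state-action occupancy and $d^{M,p}_h=\mathbb{E}_{\pi\sim p}d^{M,\pi}_h$. Definitions: $\Psi^M_{h,\varepsilon}(p)=\sup_{\pi\in\Pi}\mathbb{E}^{M,\pi}\big[\frac{d^{M,\pi}_h(x_h,a_h)}{d^{M,p}_h(x_h,a_h)+\varepsilon d^{M,\pi}_h(x_h,a_h)}\big]$, $\mathsf{Cov}^M_{h,\varepsilon}=\inf_{p\in\Delta(\Pi)}\Psi^M_{h,\varepsilon}(p)$, and $C^M_{1;h}=\inf_{\mu\in\Delta(\mathcal{X}\times\mathcal{A})}\sup_{\pi\in\Pi}\mathbb{E}^{M,\pi}\big[\frac{d^{M,\pi}_h(x_h,a_h)}{\mu(x_h,a_h)}\big]$. *)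

theory Defs
  imports "HOL-Probability.Probability"
begin

text \<open>Episodic reward-free MDP: initial state distribution (layer 1) and
  layer-dependent transition kernels P_h(. | x, a).  The horizon H is kept
  as a separate natural number.\<close>
record ('x, 'a) mdp =
  init  :: "'x pmf"
  trans :: "nat \<Rightarrow> 'x \<Rightarrow> 'a \<Rightarrow> 'x pmf"

text \<open>Randomized non-stationary policy pi = (pi_1, ..., pi_H), pi_h : X -> Delta(A).
  Pi_RNS is the set of all such policies (the whole type).\<close>
type_synonym ('x, 'a) policy = "nat \<Rightarrow> 'x \<Rightarrow> 'a pmf"

text \<open>Distribution of the state x_{n+1} at layer n+1 (0-based helper).\<close>
primrec state_dist0 :: "('x, 'a) mdp \<Rightarrow> ('x, 'a) policy \<Rightarrow> nat \<Rightarrow> 'x pmf" where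
  "state_dist0 M \<pi> 0 = init M"
| "state_dist0 M \<pi> (Suc n) =
     bind_pmf (state_dist0 M \<pi> n)
       (\<lambda>x. bind_pmf (\<pi> (Suc n) x) (\<lambda>a. trans M (Suc n) x a))"

text \<open>Law of (x_h, a_h) under M and pi, for layers h >= 1.\<close>
definition sa_dist :: "('x, 'a) mdp \<Rightarrow> ('x, 'a) policy \<Rightarrow> nat \<Rightarrow> ('x \<times> 'a) pmf" where
  "sa_dist M \<pi> h = bind_pmf (state_dist0 M \<pi> (h - 1)) (\<lambda>x. map_pmf (Pair x) (\<pi> h x))"

definition occ :: "('x, 'a) mdp \<Rightarrow> ('x, 'a) policy \<Rightarrow> nat \<Rightarrow> 'x \<times> 'a \<Rightarrow> real" where
  "occ M \<pi> h z = pmf (sa_dist M \<pi> h) z"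

definition mix_occ :: "('x, 'a) mdp \<Rightarrow> ('x, 'a) policy pmf \<Rightarrow> nat \<Rightarrow> 'x \<times> 'a \<Rightarrow> ennreal" where
  "mix_occ M p h z = (\<integral>\<^sup>+ \<pi>. ennreal (occ M \<pi> h z) \<partial>measure_pmf p)"

definition Psi :: "('x, 'a) mdp \<Rightarrow> ('x, 'a) policy set \<Rightarrow> nat \<Rightarrow> real \<Rightarrow> ('x, 'a) policy pmf \<Rightarrow> ennreal" where
  "Psi M Pol h \<epsilon> p = (SUP \<pi>\<in>Pol. \<integral>\<^sup>+ z. ennreal (occ M \<pi> h z)
        / (mix_occ M p h z + ennreal \<epsilon> * ennreal (occ M \<pi> h z)) \<partial>measure_pmf (sa_dist M \<pi> h))"

definition Cov :: "('x, 'a) mdp \<Rightarrow> ('x, 'a) policy set \<Rightarrow> nat \<Rightarrow> real \<Rightarrow> ennreal" where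
  "Cov M Pol h \<epsilon> = (INF p\<in>{p. set_pmf p \<subseteq> Pol}. Psi M Pol h \<epsilon> p)"

definition C1 :: "('x, 'a) mdp \<Rightarrow> ('x, 'a) policy set \<Rightarrow> nat \<Rightarrow> ennreal" where
  "C1 M Pol h = (INF \<mu>\<in>(UNIV :: ('x \<times> 'a) pmf set). SUP \<pi>\<in>Pol.
        \<integral>\<^sup>+ z. ennreal (occ M \<pi> h z) / ennreal (pmf \<mu> z) \<partial>measure_pmf (sa_dist M \<pi> h))"

definition esqrt :: "ennreal \<Rightarrow> ennreal" where
  "esqrt x = (if x = \<top> then \<top> else ennreal (sqrt (enn2real x)))"

end

theory Submission
  imports Defs
begin

(* Fix \<mu> nearly optimal in the definition of C_{1;h} and a cap g > 0, and consider the
   potential Phi(p) = sum_z min (d^p(z)) (g \<mu>(z)) <= g on mixtures p of policies in Pi; let p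
   maximise Phi up to \<eta>.  Mixing weight t of any \<pi> in Pi into p raises Phi by at least
   t d^\<pi>(A) - t g/(1 - t), where A is the set on which d^p + t d^\<pi> stays below the cap; hence
   d^\<pi>(A) <= \<eta>/t + g/(1 - t).  On A the ratio d^\<pi>/(d^p + \<epsilon> d^\<pi>) is at most 1/\<epsilon>, and off A
   (using t <= \<epsilon>) it is at most d^\<pi>/(g \<mu>), whose d^\<pi>-expectation is about C_{1;h}/g.  So
   Psi(p) is roughly g/\<epsilon> + C_{1;h}/g, and g = \<epsilon> (sqrt (C_{1;h}/\<epsilon>) + 1/4) balances the two
   terms.  Neither the layer range nor the horizon plays a role. *)

lemma min_plus_indicator_le_min_mixture:
  fixes a b c t :: real
  assumes "a \<ge> 0" "b \<ge> 0" "c \<ge> 0" "0 < t" "t < 1"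
  shows "min a c + (if a + t * b \<le> c then t * b else 0)
     \<le> min (t * b + (1 - t) * a) c + t / (1 - t) * c"
proof -
  have tc: "t * c \<le> t / (1 - t) * c"
    using assms by (intro mult_right_mono) (auto simp: field_simps)
  have "(1 - t) * min a c \<le> (1 - t) * a" "t * min a c \<le> t * c"
    using assms by (intro mult_left_mono; simp)+
  then have convex: "min a c \<le> (1 - t) * a + t * c"
    by (simp add: algebra_simps)
  have tb: "t * b \<ge> 0" using assms by simp
  show ?thesis
  proof (cases "a + t * b \<le> c")
    case True
    have "a \<le> c" using True tb by linarith
    then have ta: "0 \<le> t * a" "t * a \<le> t * c"
      using assms by simp_all
    then have "t * b + (1 - t) * a \<le> c"
      using True by (simp add: algebra_simps)
    then show ?thesis using True ta tc by (simp add: algebra_simps)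
  next
    case False
    have "0 \<le> t * c" using assms by simp
    then have "min a c \<le> min (t * b + (1 - t) * a + t / (1 - t) * c) (c + t / (1 - t) * c)"
      using tb tc convex by simp
    then show ?thesis using False by (auto simp: min_def)
  qed
qed

definition clipped_mass :: "'z pmf \<Rightarrow> real \<Rightarrow> ('z \<Rightarrow> real) \<Rightarrow> ennreal" where
  "clipped_mass \<mu> g f = (\<integral>\<^sup>+ z. ennreal (min (f z) (g * pmf \<mu> z)) \<partial>count_space UNIV)"

lemma nn_integral_scaled_pmf:
  "0 \<le> c \<Longrightarrow> (\<integral>\<^sup>+ z. ennreal (c * pmf \<mu> z) \<partial>count_space UNIV) = ennreal c"
  by (simp add: ennreal_mult'' nn_integral_cmult nn_integral_pmf)

lemma clipped_mass_le:
  assumes "0 \<le> g"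
  shows "clipped_mass \<mu> g f \<le> ennreal g"
proof -
  have "clipped_mass \<mu> g f \<le> (\<integral>\<^sup>+ z. ennreal (g * pmf \<mu> z) \<partial>count_space UNIV)"
    unfolding clipped_mass_def by (intro nn_integral_mono ennreal_leI min.cobounded2)
  then show ?thesis using assms by (simp add: nn_integral_scaled_pmf)
qed

lemma clipped_mass_mixture_ge:
  fixes a :: "'z \<Rightarrow> real" and \<mu> \<nu> :: "'z pmf"
  assumes a: "\<And>z. 0 \<le> a z" and g: "0 < g" and t: "0 < t" "t < 1"
  shows "clipped_mass \<mu> g a + ennreal t * emeasure \<nu> {z. a z + t * pmf \<nu> z \<le> g * pmf \<mu> z}
    \<le> clipped_mass \<mu> g (\<lambda>z. t * pmf \<nu> z + (1 - t) * a z) + ennreal (t / (1 - t) * g)"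
proof -
  define A where "A = {z. a z + t * pmf \<nu> z \<le> g * pmf \<mu> z}"
  define \<kappa> where "\<kappa> = t / (1 - t) * g"
  have \<kappa>: "0 \<le> \<kappa>" using g t by (simp add: \<kappa>_def)
  have pointwise: "ennreal (min (a z) (g * pmf \<mu> z)) + ennreal t * (ennreal (pmf \<nu> z) * indicator A z)
      \<le> ennreal (min (t * pmf \<nu> z + (1 - t) * a z) (g * pmf \<mu> z)) + ennreal (\<kappa> * pmf \<mu> z)"
    for z
  proof -
    have "min (a z) (g * pmf \<mu> z) + (if z \<in> A then t * pmf \<nu> z else 0)
        \<le> min (t * pmf \<nu> z + (1 - t) * a z) (g * pmf \<mu> z) + t / (1 - t) * (g * pmf \<mu> z)"
      unfolding A_def mem_Collect_eq using a g t by (intro min_plus_indicator_le_min_mixture) simp_all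
    then show ?thesis
      using a g t unfolding \<kappa>_def
      by (cases "z \<in> A") (simp_all add: ennreal_plus[symmetric] ennreal_mult''[symmetric] del: ennreal_plus)
  qed
  have "clipped_mass \<mu> g a + ennreal t * emeasure \<nu> A
      = (\<integral>\<^sup>+ z. ennreal (min (a z) (g * pmf \<mu> z)) + ennreal t * (ennreal (pmf \<nu> z) * indicator A z)
          \<partial>count_space UNIV)"
    by (simp add: clipped_mass_def nn_integral_add nn_integral_cmult nn_integral_measure_pmf[symmetric])
  also have "\<dots> \<le> (\<integral>\<^sup>+ z. ennreal (min (t * pmf \<nu> z + (1 - t) * a z) (g * pmf \<mu> z))
          + ennreal (\<kappa> * pmf \<mu> z) \<partial>count_space UNIV)"
    by (intro nn_integral_mono pointwise)
  also have "\<dots> = clipped_mass \<mu> g (\<lambda>z. t * pmf \<nu> z + (1 - t) * a z) + ennreal \<kappa>"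
    using \<kappa> by (simp add: clipped_mass_def nn_integral_add nn_integral_scaled_pmf)
  finally show ?thesis unfolding A_def \<kappa>_def .
qed

lemma prob_below_cap_le_of_mixture_gain:
  fixes a :: "'z \<Rightarrow> real" and \<mu> \<nu> :: "'z pmf"
  assumes a: "\<And>z. 0 \<le> a z" and g: "0 < g" and t: "0 < t" "t < 1" and \<eta>: "0 \<le> \<eta>"
    and gain: "clipped_mass \<mu> g (\<lambda>z. t * pmf \<nu> z + (1 - t) * a z) \<le> clipped_mass \<mu> g a + ennreal \<eta>"
  shows "measure_pmf.prob \<nu> {z. a z + t * pmf \<nu> z \<le> g * pmf \<mu> z} \<le> \<eta> / t + g / (1 - t)"
proof -
  define A where "A = {z. a z + t * pmf \<nu> z \<le> g * pmf \<mu> z}"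
  define \<kappa> where "\<kappa> = t / (1 - t) * g"
  have \<kappa>: "0 \<le> \<kappa>" using g t by (simp add: \<kappa>_def)
  have "clipped_mass \<mu> g a + ennreal t * emeasure \<nu> A
      \<le> clipped_mass \<mu> g (\<lambda>z. t * pmf \<nu> z + (1 - t) * a z) + ennreal \<kappa>"
    unfolding A_def \<kappa>_def using a g t by (rule clipped_mass_mixture_ge)
  also have "\<dots> \<le> clipped_mass \<mu> g a + (ennreal \<eta> + ennreal \<kappa>)"
    using gain by (simp add: add.assoc add_right_mono)
  finally have "clipped_mass \<mu> g a + ennreal t * emeasure \<nu> A
      \<le> clipped_mass \<mu> g a + (ennreal \<eta> + ennreal \<kappa>)" .
  moreover have "clipped_mass \<mu> g a \<noteq> \<top>"
    using clipped_mass_le[of g \<mu> a] g by (auto simp: top_unique)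
  ultimately have "ennreal t * emeasure \<nu> A \<le> ennreal (\<eta> + \<kappa>)"
    using \<eta> \<kappa> by (simp add: ennreal_add_left_cancel_le)
  also have "\<eta> + \<kappa> = t * (\<eta> / t + g / (1 - t))"
    using t by (simp add: \<kappa>_def field_simps)
  also have "ennreal \<dots> = ennreal t * ennreal (\<eta> / t + g / (1 - t))"
    using g t \<eta> by (intro ennreal_mult) simp_all
  finally have "emeasure \<nu> A \<le> ennreal (\<eta> / t + g / (1 - t))"
    using t by (simp add: ennreal_mult_le_mult_iff)
  then show ?thesis
    using g t \<eta> unfolding A_def by (simp add: measure_pmf.emeasure_eq_measure del: ennreal_plus)
qed

lemma ratio_le_indicator_plus_ratio:
  fixes a b m g \<epsilon> t :: real
  assumes a: "0 \<le> a" and b: "0 < b" and m: "0 < m" and g: "0 < g" and t: "0 < t" "t \<le> \<epsilon>"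
  shows "b / (a + \<epsilon> * b) \<le> (if a + t * b \<le> g * m then 1 / \<epsilon> else 0) + 1 / g * (b / m)"
proof (cases "a + t * b \<le> g * m")
  case True
  have "0 < \<epsilon> * b" using b t by simp
  then have "b / (a + \<epsilon> * b) \<le> b / (\<epsilon> * b)"
    using a b by (intro divide_left_mono) auto
  moreover have "b / (\<epsilon> * b) = 1 / \<epsilon>" "0 \<le> 1 / g * (b / m)" using b g m by simp_all
  ultimately show ?thesis unfolding if_P[OF True] by linarith
next
  case False
  have "t * b \<le> \<epsilon> * b" using b t by simp
  then have "g * m \<le> a + \<epsilon> * b" using False by linarith
  then have "b / (a + \<epsilon> * b) \<le> b / (g * m)"
    using b g m by (intro frac_le) simp_all
  then show ?thesis using False by simp
qed

lemma ennreal_ratio_le_indicator_plus_ratio: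
  fixes a b m g \<epsilon> t :: real
  assumes a: "0 \<le> a" and b: "0 \<le> b" and m: "0 \<le> m" and g: "0 < g" and t: "0 < t" "t \<le> \<epsilon>"
  shows "ennreal b / (ennreal a + ennreal \<epsilon> * ennreal b)
    \<le> ennreal (1 / \<epsilon>) * of_bool (a + t * b \<le> g * m) + ennreal (1 / g) * (ennreal b / ennreal m)"
proof -
  consider "b = 0" | "0 < b" "m = 0" | "0 < b" "0 < m" using b m by linarith
  then show ?thesis
  proof cases
    case 3
    have "0 < a + \<epsilon> * b" using a 3 t by (simp add: add_nonneg_pos)
    then show ?thesis
      using ratio_le_indicator_plus_ratio[OF a 3 g t] a g t 3
      by (simp add: ennreal_mult''[symmetric] ennreal_plus[symmetric] divide_ennreal of_bool_def split: if_splits del: ennreal_plus)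
  qed (use g in \<open>simp_all add: ennreal_mult_top\<close>)
qed

lemma nn_integral_ratio_le:
  fixes \<nu> \<mu> :: "'z pmf" and a :: "'z \<Rightarrow> real"
  assumes a: "\<And>z. 0 \<le> a z" and g: "0 < g" and t: "0 < t" "t \<le> \<epsilon>"
  shows "(\<integral>\<^sup>+ z. ennreal (pmf \<nu> z) / (ennreal (a z) + ennreal \<epsilon> * ennreal (pmf \<nu> z)) \<partial>\<nu>)
    \<le> ennreal (1 / \<epsilon>) * emeasure \<nu> {z. a z + t * pmf \<nu> z \<le> g * pmf \<mu> z}
      + ennreal (1 / g) * (\<integral>\<^sup>+ z. ennreal (pmf \<nu> z) / ennreal (pmf \<mu> z) \<partial>\<nu>)"
proof -
  define A where "A = {z. a z + t * pmf \<nu> z \<le> g * pmf \<mu> z}"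
  have "(\<integral>\<^sup>+ z. ennreal (pmf \<nu> z) / (ennreal (a z) + ennreal \<epsilon> * ennreal (pmf \<nu> z)) \<partial>\<nu>)
      \<le> (\<integral>\<^sup>+ z. ennreal (1 / \<epsilon>) * indicator A z
          + ennreal (1 / g) * (ennreal (pmf \<nu> z) / ennreal (pmf \<mu> z)) \<partial>\<nu>)"
    unfolding A_def indicator_def mem_Collect_eq
    by (intro nn_integral_mono ennreal_ratio_le_indicator_plus_ratio a pmf_nonneg g t)
  also have "\<dots> = ennreal (1 / \<epsilon>) * emeasure \<nu> A
      + ennreal (1 / g) * (\<integral>\<^sup>+ z. ennreal (pmf \<nu> z) / ennreal (pmf \<mu> z) \<partial>\<nu>)"
    by (simp add: nn_integral_add nn_integral_cmult)
  finally show ?thesis unfolding A_def .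
qed

lemma bounded_ennreal_near_maximizer:
  fixes f :: "'i \<Rightarrow> ennreal"
  assumes "A \<noteq> {}" and "\<And>i. i \<in> A \<Longrightarrow> f i \<le> ennreal B" and "0 < \<eta>"
  obtains i where "i \<in> A" and "\<And>j. j \<in> A \<Longrightarrow> f j \<le> f i + ennreal \<eta>"
proof -
  have "(SUP j\<in>A. f j) \<noteq> \<infinity>"
    using assms(2) by (metis SUP_least ennreal_neq_top infinity_ennreal_def neq_top_trans)
  then obtain i where i: "i \<in> A" "(SUP j\<in>A. f j) < f i + ennreal \<eta>"
    using SUP_approx_ennreal[OF assms(3) assms(1) refl] by blast
  show ?thesis
  proof (rule that[OF i(1)])
    fix j assume "j \<in> A"
    then have "f j \<le> (SUP j\<in>A. f j)" by (rule SUP_upper)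
    then show "f j \<le> f i + ennreal \<eta>" using i(2) by simp
  qed
qed

lemma parameter_choice_bound:
  fixes \<epsilon> s t :: real
  assumes \<epsilon>: "0 < \<epsilon>" and s: "0 \<le> s" and t: "0 < t" "t \<le> 1 / (4 * s + 2)"
  shows "((t * \<epsilon> / 4) / t + \<epsilon> * (s + 1/4) / (1 - t)) / \<epsilon>
      + (\<epsilon> * s\<^sup>2 + \<epsilon> / 16) / (\<epsilon> * (s + 1/4)) \<le> 1 + 2 * s"
proof -
  have "t * (4 * s + 2) \<le> 1" using t s by (simp add: le_divide_eq)
  moreover have "0 \<le> t * s" using t s by simp
  ultimately have "t < 1" "(s + 1/4) \<le> (s + 1/2) * (1 - t)"
    by (simp_all add: algebra_simps)
  then have "(s + 1/4) / (1 - t) \<le> s + 1/2"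
    by (simp add: divide_le_eq)
  moreover have "((t * \<epsilon> / 4) / t + \<epsilon> * (s + 1/4) / (1 - t)) / \<epsilon> = 1/4 + (s + 1/4) / (1 - t)"
    using \<epsilon> t by (simp add: field_simps)
  moreover have "\<epsilon> * s\<^sup>2 + \<epsilon> / 16 = \<epsilon> * (s\<^sup>2 + 1/16)"
    by (simp add: algebra_simps)
  then have "(\<epsilon> * s\<^sup>2 + \<epsilon> / 16) / (\<epsilon> * (s + 1/4)) = (s\<^sup>2 + 1/16) / (s + 1/4)"
    using \<epsilon> by simp
  moreover have "(s\<^sup>2 + 1/16) / (s + 1/4) \<le> s + 1/4"
    using s by (simp add: divide_le_eq power2_eq_square algebra_simps)
  ultimately show ?thesis by linarith
qed

definition avg_occ :: "('x, 'a) mdp \<Rightarrow> ('x, 'a) policy pmf \<Rightarrow> nat \<Rightarrow> 'x \<times> 'a \<Rightarrow> real" where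
  "avg_occ M p h z = measure_pmf.expectation p (\<lambda>\<pi>. occ M \<pi> h z)"

lemma avg_occ_nonneg: "0 \<le> avg_occ M p h z"
  unfolding avg_occ_def occ_def by simp

lemma mix_occ_eq_avg_occ: "mix_occ M p h z = ennreal (avg_occ M p h z)"
  unfolding mix_occ_def avg_occ_def occ_def
  by (intro nn_integral_eq_integral measure_pmf.integrable_const_bound[where B = 1])
     (simp_all add: pmf_le_1)

lemma avg_occ_mixture:
  assumes "0 \<le> t" "t \<le> 1"
  shows "avg_occ M (bind_pmf (bernoulli_pmf t) (\<lambda>c. if c then return_pmf \<pi> else q)) h z
    = t * occ M \<pi> h z + (1 - t) * avg_occ M q h z"
proof -
  have "ennreal (avg_occ M (bind_pmf (bernoulli_pmf t) (\<lambda>c. if c then return_pmf \<pi> else q)) h z)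
      = ennreal (occ M \<pi> h z) * ennreal t + ennreal (avg_occ M q h z) * ennreal (1 - t)"
    using assms by (simp add: mix_occ_eq_avg_occ[symmetric] mix_occ_def)
  also have "\<dots> = ennreal (t * occ M \<pi> h z + (1 - t) * avg_occ M q h z)"
    using assms by (simp add: occ_def avg_occ_nonneg ennreal_mult'' mult.commute)
  finally show ?thesis
    by (rule ennreal_inj[THEN iffD1, rotated 2]) (use assms in \<open>simp_all add: avg_occ_nonneg occ_def\<close>)
qed

lemma Psi_le_at_clipped_mass_near_maximizer:
  fixes M :: "('x, 'a) mdp" and \<mu> :: "('x \<times> 'a) pmf"
  assumes \<epsilon>: "0 < \<epsilon>" and g: "0 < g" and t: "0 < t" "t < 1" "t \<le> \<epsilon>"
    and \<eta>: "0 \<le> \<eta>" and C: "0 \<le> C"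
    and q0: "set_pmf q0 \<subseteq> Pol"
    and near_max: "\<And>q. set_pmf q \<subseteq> Pol \<Longrightarrow>
      clipped_mass \<mu> g (avg_occ M q h) \<le> clipped_mass \<mu> g (avg_occ M q0 h) + ennreal \<eta>"
    and \<mu>: "\<And>\<pi>. \<pi> \<in> Pol \<Longrightarrow>
      (\<integral>\<^sup>+ z. ennreal (occ M \<pi> h z) / ennreal (pmf \<mu> z) \<partial>sa_dist M \<pi> h) \<le> ennreal C"
  shows "Psi M Pol h \<epsilon> q0 \<le> ennreal ((\<eta> / t + g / (1 - t)) / \<epsilon> + C / g)"
  unfolding Psi_def
proof (rule SUP_least)
  fix \<pi> assume \<pi>: "\<pi> \<in> Pol"
  define \<nu> where "\<nu> = sa_dist M \<pi> h"
  define a where "a = avg_occ M q0 h"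
  define A where "A = {z. a z + t * pmf \<nu> z \<le> g * pmf \<mu> z}"
  define qt where "qt = bind_pmf (bernoulli_pmf t) (\<lambda>c. if c then return_pmf \<pi> else q0)"
  have "set_pmf qt \<subseteq> Pol"
    using q0 \<pi> t by (auto simp: qt_def split: if_splits)
  moreover have "avg_occ M qt h = (\<lambda>z. t * pmf \<nu> z + (1 - t) * a z)"
    using t by (simp add: fun_eq_iff qt_def a_def \<nu>_def avg_occ_mixture occ_def)
  ultimately have "clipped_mass \<mu> g (\<lambda>z. t * pmf \<nu> z + (1 - t) * a z) \<le> clipped_mass \<mu> g a + ennreal \<eta>"
    using near_max unfolding a_def by metis
  then have prob: "measure_pmf.prob \<nu> A \<le> \<eta> / t + g / (1 - t)"
    unfolding A_def using a_def avg_occ_nonneg g t \<eta> by (intro prob_below_cap_le_of_mixture_gain) auto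
  have "(\<integral>\<^sup>+ z. ennreal (occ M \<pi> h z) / (mix_occ M q0 h z + ennreal \<epsilon> * ennreal (occ M \<pi> h z))
      \<partial>sa_dist M \<pi> h)
    = (\<integral>\<^sup>+ z. ennreal (pmf \<nu> z) / (ennreal (a z) + ennreal \<epsilon> * ennreal (pmf \<nu> z)) \<partial>\<nu>)"
    by (simp add: \<nu>_def a_def occ_def mix_occ_eq_avg_occ)
  also have "\<dots> \<le> ennreal (1 / \<epsilon>) * emeasure \<nu> A
      + ennreal (1 / g) * (\<integral>\<^sup>+ z. ennreal (pmf \<nu> z) / ennreal (pmf \<mu> z) \<partial>\<nu>)"
    unfolding A_def using a_def avg_occ_nonneg g t by (intro nn_integral_ratio_le) auto
  also have "\<dots> \<le> ennreal (1 / \<epsilon>) * ennreal (\<eta> / t + g / (1 - t)) + ennreal (1 / g) * ennreal C"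
    using prob \<mu>[OF \<pi>]
    by (intro add_mono mult_left_mono) (simp_all add: \<nu>_def occ_def measure_pmf.emeasure_eq_measure ennreal_leI)
  also have "\<dots> = ennreal ((\<eta> / t + g / (1 - t)) / \<epsilon> + C / g)"
    using \<epsilon> g t \<eta> C by (simp add: ennreal_mult''[symmetric] ennreal_plus[symmetric] del: ennreal_plus)
  finally show "(\<integral>\<^sup>+ z. ennreal (occ M \<pi> h z) / (mix_occ M q0 h z + ennreal \<epsilon> * ennreal (occ M \<pi> h z))
      \<partial>sa_dist M \<pi> h) \<le> ennreal ((\<eta> / t + g / (1 - t)) / \<epsilon> + C / g)" .
qed

lemma C1_near_optimal_measure:
  assumes "C1 M Pol h = ennreal C" and "0 \<le> C" and "0 < \<xi>"
  obtains \<mu> where "\<And>\<pi>. \<pi> \<in> Pol \<Longrightarrow>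
    (\<integral>\<^sup>+ z. ennreal (occ M \<pi> h z) / ennreal (pmf \<mu> z) \<partial>sa_dist M \<pi> h) \<le> ennreal (C + \<xi>)"
proof -
  have "C1 M Pol h \<noteq> \<infinity>" using assms(1) by simp
  then obtain \<mu> where \<mu>: "(SUP \<pi>\<in>Pol. \<integral>\<^sup>+ z. ennreal (occ M \<pi> h z) / ennreal (pmf \<mu> z) \<partial>sa_dist M \<pi> h)
      < C1 M Pol h + ennreal \<xi>"
    using INF_approx_ennreal[OF \<open>0 < \<xi>\<close> C1_def[of M Pol h]] by blast
  show ?thesis
  proof (rule that)
    fix \<pi> assume "\<pi> \<in> Pol"
    then have "(\<integral>\<^sup>+ z. ennreal (occ M \<pi> h z) / ennreal (pmf \<mu> z) \<partial>sa_dist M \<pi> h)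
        \<le> (SUP \<pi>\<in>Pol. \<integral>\<^sup>+ z. ennreal (occ M \<pi> h z) / ennreal (pmf \<mu> z) \<partial>sa_dist M \<pi> h)"
      by (rule SUP_upper)
    also have "\<dots> \<le> ennreal (C + \<xi>)"
      using \<mu> assms by simp
    finally show "(\<integral>\<^sup>+ z. ennreal (occ M \<pi> h z) / ennreal (pmf \<mu> z) \<partial>sa_dist M \<pi> h) \<le> ennreal (C + \<xi>)" .
  qed
qed

lemma clipped_mass_near_maximizer:
  fixes M :: "('x, 'a) mdp" and \<mu> :: "('x \<times> 'a) pmf"
  assumes "Pol \<noteq> {}" and "0 \<le> g" and "0 < \<eta>"
  obtains q0 where "set_pmf q0 \<subseteq> Pol"
    and "\<And>q. set_pmf q \<subseteq> Pol \<Longrightarrow>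
      clipped_mass \<mu> g (avg_occ M q h) \<le> clipped_mass \<mu> g (avg_occ M q0 h) + ennreal \<eta>"
proof -
  from \<open>Pol \<noteq> {}\<close> obtain \<pi> where "\<pi> \<in> Pol" by blast
  then have "{q. set_pmf q \<subseteq> Pol} \<noteq> {}" by (auto intro!: exI[of _ "return_pmf \<pi>"])
  then show ?thesis
    by (rule bounded_ennreal_near_maximizer[where f = "\<lambda>q. clipped_mass \<mu> g (avg_occ M q h)" and B = g])
      (use that clipped_mass_le[OF \<open>0 \<le> g\<close>] \<open>0 < \<eta>\<close> in auto)
qed

theorem proposition7p1:
  fixes M :: "('x :: countable, 'a) mdp"
    and H :: nat and h :: nat
    and Pol :: "('x, 'a) policy set"
    and \<epsilon> :: real
  assumes "Pol \<noteq> {}"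
    and "h \<in> {1..H}"
    and "\<epsilon> > 0"
  shows "Cov M Pol h \<epsilon> \<le> 1 + 2 * esqrt (C1 M Pol h / ennreal \<epsilon>)"
proof (cases "C1 M Pol h = \<top>")
  case True
  then show ?thesis by (simp add: esqrt_def ennreal_top_divide ennreal_mult_top)
next
  case False
  then obtain C where C: "C1 M Pol h = ennreal C" "0 \<le> C" by (cases "C1 M Pol h") auto
  note \<epsilon> = \<open>\<epsilon> > 0\<close>
  define s where "s = sqrt (C / \<epsilon>)"
  define g where "g = \<epsilon> * (s + 1/4)"
  define t where "t = min \<epsilon> (1 / (4 * s + 2))"
  define \<eta> where "\<eta> = t * \<epsilon> / 4"
  have s: "0 \<le> s" "C = \<epsilon> * s\<^sup>2" using C \<epsilon> by (simp_all add: s_def)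
  then have g: "0 < g" and t: "0 < t" "t \<le> \<epsilon>" "t \<le> 1 / (4 * s + 2)" and \<eta>: "0 < \<eta>"
    using \<epsilon> by (simp_all add: g_def t_def \<eta>_def)
  moreover have "1 / (4 * s + 2) \<le> 1 / 2" using s(1) by (intro divide_left_mono) auto
  ultimately have "t < 1" by linarith
  obtain \<mu> where \<mu>: "\<And>\<pi>. \<pi> \<in> Pol \<Longrightarrow>
      (\<integral>\<^sup>+ z. ennreal (occ M \<pi> h z) / ennreal (pmf \<mu> z) \<partial>sa_dist M \<pi> h) \<le> ennreal (C + \<epsilon> / 16)"
    using C1_near_optimal_measure[OF C] \<epsilon> by (metis zero_less_divide_iff zero_less_numeral)
  obtain q0 where "set_pmf q0 \<subseteq> Pol"
    and "\<And>q. set_pmf q \<subseteq> Pol \<Longrightarrow>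
      clipped_mass \<mu> g (avg_occ M q h) \<le> clipped_mass \<mu> g (avg_occ M q0 h) + ennreal \<eta>"
    using clipped_mass_near_maximizer[OF \<open>Pol \<noteq> {}\<close> less_imp_le[OF g] \<eta>] by blast
  then have "Cov M Pol h \<epsilon> \<le> ennreal ((\<eta> / t + g / (1 - t)) / \<epsilon> + (C + \<epsilon> / 16) / g)"
    unfolding Cov_def using \<epsilon> g t \<open>t < 1\<close> \<eta> C \<mu>
    by (intro INF_lower2[of q0] Psi_le_at_clipped_mass_near_maximizer) auto
  also have "\<dots> \<le> ennreal (1 + 2 * s)"
    unfolding g_def \<eta>_def s(2) by (rule ennreal_leI[OF parameter_choice_bound[OF \<epsilon> s(1) t(1,3)]])
  also have "\<dots> = 1 + 2 * esqrt (C1 M Pol h / ennreal \<epsilon>)"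
    using C \<epsilon> s(1) by (simp add: esqrt_def divide_ennreal s_def ennreal_mult'')
  finally show ?thesis .
qed

end
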